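(* Let $n\ge 2$ and $1\le \ell\le n-1$. Let $\mathbf{x}=(x_1,\dots,x_n)$ satisfy $x_1\le\dots\le x_\ell<0\le x_{\ell+1}\le\dots\le x_n$, and let $M=-\mathbf{x}^T\mathbf{x}$, with pairwise distinct off-diagonal entries. Then $\beta_k(t)=0$ for all $k>0$ and all $t\in[0,1]$.
   Context: Betti curves of a symmetric matrix. Let $M$ be a real symmetric $n\times n$ matrix whose $\binom{n}{2}$ off-diagonal entries $M_{ij}$ ($i<j$) are pairwise distinct. The ordering matrix $\widehat{M}$ is defined by $\widehat{M}_{ij}=k$ if $M_{ij}$ is the $k$-th smallest off-diagonal entry. For $t\in[0,1]$, $G_t=G_t(M)$ is the graph on vertex set $\{1,\dots,n\}$ with edge set $\{\{i,j\} : \widehat{M}_{ij}\le t\binom{n}{2}\}$ (so edges are added in increasing order of the entries $M_{ij}$; $G_0$ has no edges and $G_1$ is complete). $X(G_t)$ is the clique complex of $G_t$ (every $k$-clique of $G_t$ is filled in by a $(k-1)$-dimensional simplex). The $i$-th Betti curve of $M$ is $\beta_i(t)=\operatorname{rank} H_i(X(G_t);\mathbf{k})$, with $H_i$ simplicial homology with coefficients in a fixed field $\mathbf{k}$. Here $\mathbf{x}$ is a row vector, so $\mathbf{x}^T\mathbf{x}$ is the $n\times n$ matrix with entries $x_ix_j$. *)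

theory Defs
  imports Complex_Main "HOL-Library.Function_Algebras"
begin

definition ordering_rank :: "(nat \<Rightarrow> nat \<Rightarrow> real) \<Rightarrow> nat \<Rightarrow> nat \<Rightarrow> nat \<Rightarrow> nat" where
  "ordering_rank M n i j = card {(a, b). 1 \<le> a \<and> a < b \<and> b \<le> n \<and> M a b \<le> M i j}"

definition graph_edge :: "(nat \<Rightarrow> nat \<Rightarrow> real) \<Rightarrow> nat \<Rightarrow> real \<Rightarrow> nat \<Rightarrow> nat \<Rightarrow> bool" where
  "graph_edge M n t i j \<longleftrightarrow> i \<in> {1..n} \<and> j \<in> {1..n} \<and> i \<noteq> j \<and>
     real (ordering_rank M n (min i j) (max i j)) \<le> t * real (n choose 2)"

text \<open>d-dimensional simplices of the clique complex X(G) of the graph with vertex set V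
  and edge relation E: (d+1)-cliques, represented as strictly increasing vertex lists
  (this fixes the orientation).\<close>
definition clique_simplices :: "nat set \<Rightarrow> (nat \<Rightarrow> nat \<Rightarrow> bool) \<Rightarrow> nat \<Rightarrow> nat list set" where
  "clique_simplices V E d = {\<sigma>. sorted_wrt (<) \<sigma> \<and> length \<sigma> = Suc d \<and> set \<sigma> \<subseteq> V \<and>
      (\<forall>a\<in>set \<sigma>. \<forall>b\<in>set \<sigma>. a \<noteq> b \<longrightarrow> E a b)}"

definition chains :: "'k itself \<Rightarrow> nat set \<Rightarrow> (nat \<Rightarrow> nat \<Rightarrow> bool) \<Rightarrow> nat \<Rightarrow> (nat list \<Rightarrow> 'k::field) set" where
  "chains _ V E d = {f. \<forall>\<sigma>. \<sigma> \<notin> clique_simplices V E d \<longrightarrow> f \<sigma> = 0}"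

definition boundary :: "nat set \<Rightarrow> (nat \<Rightarrow> nat \<Rightarrow> bool) \<Rightarrow> nat \<Rightarrow> (nat list \<Rightarrow> 'k::field) \<Rightarrow> nat list \<Rightarrow> 'k" where
  "boundary V E d f \<tau> = (if \<tau> \<in> clique_simplices V E d then
      (\<Sum>\<sigma>\<in>clique_simplices V E (Suc d). \<Sum>j<length \<sigma>.
          if take j \<sigma> @ drop (Suc j) \<sigma> = \<tau> then (-1) ^ j * f \<sigma> else 0)
    else 0)"

definition chain_scale :: "'k::field \<Rightarrow> (nat list \<Rightarrow> 'k) \<Rightarrow> nat list \<Rightarrow> 'k" where
  "chain_scale c f = (\<lambda>\<sigma>. c * f \<sigma>)"

definition cycles :: "'k itself \<Rightarrow> nat set \<Rightarrow> (nat \<Rightarrow> nat \<Rightarrow> bool) \<Rightarrow> nat \<Rightarrow> (nat list \<Rightarrow> 'k::field) set" where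
  "cycles K V E d = {f \<in> chains K V E d. d = 0 \<or> boundary V E (d - 1) f = (\<lambda>_. 0)}"

definition bdries :: "'k itself \<Rightarrow> nat set \<Rightarrow> (nat \<Rightarrow> nat \<Rightarrow> bool) \<Rightarrow> nat \<Rightarrow> (nat list \<Rightarrow> 'k::field) set" where
  "bdries K V E d = boundary V E d ` chains K V E (Suc d)"

definition simplicial_betti :: "'k::field itself \<Rightarrow> nat set \<Rightarrow> (nat \<Rightarrow> nat \<Rightarrow> bool) \<Rightarrow> nat \<Rightarrow> nat" where
  "simplicial_betti K V E d =
     vector_space.dim (chain_scale :: 'k \<Rightarrow> _) (cycles K V E d)
     - vector_space.dim (chain_scale :: 'k \<Rightarrow> _) (bdries K V E d)"

definition betti_curve :: "'k::field itself \<Rightarrow> (nat \<Rightarrow> nat \<Rightarrow> real) \<Rightarrow> nat \<Rightarrow> nat \<Rightarrow> real \<Rightarrow> nat" where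
  "betti_curve K M n d t = simplicial_betti K {1..n} (graph_edge M n t) d"

end

(*
  Edges of G_t are added in increasing order of -x_i x_j, so every edge inside the negative block
  {1..l} or inside the nonnegative block {l+1..n} appears before any edge between the blocks.
  If the edge {l, l+1} is present, every clique extends by l or by l+1; otherwise no edge joins the
  blocks, and every clique with at least two vertices extends by 1 (the most negative vertex) or
  by n (the largest one), and these two vertices have no common neighbour.  In either situation the
  clique complex, in positive dimensions, is covered by the closed stars of two vertices v and w that
  are adjacent or have no common neighbour, and coning first from v and then from w writes every
  cycle of positive dimension as a boundary.
*)
theory Submission
  imports Defs
begin

(* Otherwise simp turns simplex (insert u A) into an insort term that the lemmas below do not cover. *)
declare sorted_list_of_set.fold_insort_key.insert [simp del]
  sorted_list_of_set.fold_insort_key.insert_remove [simp del]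

section \<open>Clique simplices as sorted lists\<close>

definition clique :: "nat set \<Rightarrow> (nat \<Rightarrow> nat \<Rightarrow> bool) \<Rightarrow> nat set \<Rightarrow> bool" where
  "clique V E A \<longleftrightarrow> A \<subseteq> V \<and> (\<forall>a\<in>A. \<forall>b\<in>A. a \<noteq> b \<longrightarrow> E a b)"

definition sorted_index :: "nat \<Rightarrow> nat set \<Rightarrow> nat" where
  "sorted_index u A = card {a\<in>A. a < u}"

abbreviation simplex :: "nat set \<Rightarrow> nat list" where
  "simplex \<equiv> sorted_list_of_set"

abbreviation delete_nth :: "nat \<Rightarrow> 'a list \<Rightarrow> 'a list" where
  "delete_nth j xs \<equiv> take j xs @ drop (Suc j) xs"

definition link_vertices :: "nat set \<Rightarrow> (nat \<Rightarrow> nat \<Rightarrow> bool) \<Rightarrow> nat list \<Rightarrow> nat set" where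
  "link_vertices V E \<tau> = {u \<in> V. u \<notin> set \<tau> \<and> clique V E (insert u (set \<tau>))}"

lemma clique_subset: "clique V E A \<Longrightarrow> B \<subseteq> A \<Longrightarrow> clique V E B"
  by (auto simp: clique_def)

lemma clique_simplices_iff:
  "\<sigma> \<in> clique_simplices V E d \<longleftrightarrow> sorted_wrt (<) \<sigma> \<and> length \<sigma> = Suc d \<and> clique V E (set \<sigma>)"
  by (auto simp: clique_simplices_def clique_def)

lemma card_set_clique_simplex: "\<sigma> \<in> clique_simplices V E d \<Longrightarrow> card (set \<sigma>) = Suc d"
  by (auto simp: clique_simplices_iff strict_sorted_iff distinct_card)

lemma clique_simplex_other_vertex:
  assumes "\<sigma> \<in> clique_simplices V E (Suc d)"
  obtains b where "b \<in> set \<sigma>" "b \<noteq> a"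
proof -
  have "\<not> set \<sigma> \<subseteq> {a}"
    using card_set_clique_simplex[OF assms] card_mono[of "{a}" "set \<sigma>"] by auto
  then show ?thesis using that by blast
qed

lemma finite_clique_simplices: "finite V \<Longrightarrow> finite (clique_simplices V E d)"
  by (rule finite_subset[of _ "{xs. set xs \<subseteq> V \<and> length xs = Suc d}"])
     (auto simp: clique_simplices_def finite_lists_length_eq)

lemma simplex_set: "sorted_wrt (<) \<sigma> \<Longrightarrow> simplex (set \<sigma>) = \<sigma>"
  using sorted_list_of_set_unique[of "set \<sigma>" \<sigma>]
  by (simp add: strict_sorted_iff distinct_card)

lemma simplex_in_clique_simplices:
  "finite A \<Longrightarrow> card A = Suc d \<Longrightarrow> clique V E A \<Longrightarrow> simplex A \<in> clique_simplices V E d"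
  by (simp add: clique_simplices_iff)

lemma sorted_index_nth:
  assumes "sorted_wrt (<) \<sigma>" "j < length \<sigma>"
  shows "sorted_index (\<sigma>!j) (set \<sigma>) = j"
proof -
  obtain ys zs where \<sigma>: "\<sigma> = ys @ \<sigma>!j # zs" and ys: "length ys = j"
    using assms(2) id_take_nth_drop[of j \<sigma>] by (metis length_take min.absorb4)
  have "sorted_wrt (<) (ys @ \<sigma>!j # zs)"
    using assms(1) \<sigma> by simp
  then have "{a\<in>set (ys @ \<sigma>!j # zs). a < \<sigma>!j} = set ys" and "distinct ys"
    by (auto simp: sorted_wrt_append strict_sorted_iff)
  then show ?thesis
    using ys \<sigma> by (metis sorted_index_def distinct_card)
qed

lemma sorted_wrt_delete_nth:
  assumes "sorted_wrt (<) \<sigma>" "j < length \<sigma>"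
  shows "sorted_wrt (<) (delete_nth j \<sigma>)"
proof -
  have "sorted_wrt (<) (take j \<sigma> @ \<sigma>!j # drop (Suc j) \<sigma>)"
    using assms by (simp add: id_take_nth_drop[symmetric])
  then show ?thesis
    by (auto simp: sorted_wrt_append)
qed

lemma set_delete_nth:
  assumes "distinct \<sigma>" "j < length \<sigma>"
  shows "set (delete_nth j \<sigma>) = set \<sigma> - {\<sigma>!j}"
proof -
  have "distinct (take j \<sigma> @ \<sigma>!j # drop (Suc j) \<sigma>)"
    using assms by (simp add: id_take_nth_drop[symmetric])
  moreover have "set \<sigma> = insert (\<sigma>!j) (set (delete_nth j \<sigma>))"
    using assms(2) by (subst id_take_nth_drop[of j \<sigma>]) auto
  ultimately show ?thesis
    by auto
qed

lemma
  assumes "finite A" "u \<in> A"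
  shows nth_simplex_sorted_index: "simplex A ! sorted_index u A = u"
    and sorted_index_less_card: "sorted_index u A < card A"
proof -
  obtain i where i: "i < length (simplex A)" "simplex A ! i = u"
    using assms by (metis in_set_conv_nth set_sorted_list_of_set)
  then have "sorted_index u A = i"
    using sorted_index_nth[of "simplex A" i] assms(1) by simp
  then show "simplex A ! sorted_index u A = u" "sorted_index u A < card A"
    using i by auto
qed

lemma sorted_index_insert_self: "sorted_index u (insert u A) = sorted_index u A"
  and sorted_index_remove_self: "sorted_index u (A - {u}) = sorted_index u A"
  unfolding sorted_index_def by (rule arg_cong[where f = card], auto)+

lemma sorted_index_insert:
  assumes "finite A" "w \<notin> A"
  shows "sorted_index u (insert w A) = (if w < u then Suc (sorted_index u A) else sorted_index u A)"
proof -
  have "{a\<in>insert w A. a < u} = (if w < u then insert w {a\<in>A. a < u} else {a\<in>A. a < u})"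
    by auto
  then show ?thesis
    using assms by (simp add: sorted_index_def)
qed

lemma link_vertex_coface:
  assumes \<tau>: "\<tau> \<in> clique_simplices V E d" and u: "u \<in> link_vertices V E \<tau>"
  defines "\<sigma> \<equiv> simplex (insert u (set \<tau>))" and "j \<equiv> sorted_index u (set \<tau>)"
  shows "\<sigma> \<in> clique_simplices V E (Suc d)" and "j < length \<sigma>" and "\<sigma> ! j = u"
    and "delete_nth j \<sigma> = \<tau>"
proof -
  have u\<tau>: "u \<notin> set \<tau>" "clique V E (insert u (set \<tau>))"
    using u by (auto simp: link_vertices_def)
  have card: "card (insert u (set \<tau>)) = Suc (Suc d)"
    using u\<tau> card_set_clique_simplex[OF \<tau>] by simp
  show \<sigma>: "\<sigma> \<in> clique_simplices V E (Suc d)"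
    unfolding \<sigma>_def using card u\<tau> by (intro simplex_in_clique_simplices) auto
  show j: "j < length \<sigma>" and nth: "\<sigma> ! j = u"
    using nth_simplex_sorted_index[of "insert u (set \<tau>)" u] sorted_index_less_card[of "insert u (set \<tau>)" u]
    by (simp_all add: \<sigma>_def j_def sorted_index_insert_self)
  have "sorted_wrt (<) (delete_nth j \<sigma>)"
    using \<sigma> j by (simp add: clique_simplices_iff sorted_wrt_delete_nth)
  moreover have "set \<sigma> = insert u (set \<tau>)" "distinct \<sigma>"
    unfolding \<sigma>_def by simp_all
  then have "set (delete_nth j \<sigma>) = set \<tau>"
    using set_delete_nth[OF _ j] nth u\<tau> by auto
  moreover have "sorted_wrt (<) \<tau>"
    using \<tau> by (simp add: clique_simplices_iff)
  ultimately show "delete_nth j \<sigma> = \<tau>"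
    by (metis simplex_set)
qed

lemma deleted_vertex_in_link:
  assumes \<sigma>: "\<sigma> \<in> clique_simplices V E (Suc d)" and j: "j < length \<sigma>"
    and \<tau>: "delete_nth j \<sigma> = \<tau>"
  shows "\<sigma> ! j \<in> link_vertices V E \<tau>" and "simplex (insert (\<sigma> ! j) (set \<tau>)) = \<sigma>"
    and "sorted_index (\<sigma> ! j) (set \<tau>) = j"
proof -
  have sorted: "sorted_wrt (<) \<sigma>" and clique: "clique V E (set \<sigma>)"
    using \<sigma> by (auto simp: clique_simplices_iff)
  have set\<tau>: "set \<tau> = set \<sigma> - {\<sigma> ! j}"
    using set_delete_nth[OF _ j] sorted \<tau> by (simp add: strict_sorted_iff)
  have ins: "insert (\<sigma> ! j) (set \<tau>) = set \<sigma>"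
    using set\<tau> nth_mem[OF j] by blast
  have "\<sigma> ! j \<in> V"
    using clique nth_mem[OF j] by (auto simp: clique_def)
  then show "\<sigma> ! j \<in> link_vertices V E \<tau>"
    using clique set\<tau> ins by (simp add: link_vertices_def)
  show "simplex (insert (\<sigma> ! j) (set \<tau>)) = \<sigma>"
    using ins sorted by (simp add: simplex_set)
  show "sorted_index (\<sigma> ! j) (set \<tau>) = j"
    using set\<tau> sorted_index_remove_self sorted_index_nth[OF sorted j] by simp
qed

lemma boundary_eq_sum_link_vertices:
  fixes f :: "nat list \<Rightarrow> 'k::field"
  assumes "finite V" and \<tau>: "\<tau> \<in> clique_simplices V E d"
  shows "boundary V E d f \<tau> =
    (\<Sum>u\<in>link_vertices V E \<tau>. (-1) ^ sorted_index u (set \<tau>) * f (simplex (insert u (set \<tau>))))"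
proof -
  let ?S = "clique_simplices V E (Suc d)"
  let ?P = "{p \<in> (SIGMA \<sigma>:?S. {..<length \<sigma>}). delete_nth (snd p) (fst p) = \<tau>}"
  have "finite ?S"
    using assms(1) by (rule finite_clique_simplices)
  then have "boundary V E d f \<tau> = (\<Sum>p\<in>(SIGMA \<sigma>:?S. {..<length \<sigma>}).
      if delete_nth (snd p) (fst p) = \<tau> then (-1) ^ snd p * f (fst p) else 0)"
    using \<tau> by (simp add: boundary_def sum.Sigma case_prod_unfold)
  also have "\<dots> = (\<Sum>p\<in>?P. (-1) ^ snd p * f (fst p))"
    using \<open>finite ?S\<close> by (simp add: sum.inter_filter)
  also have "\<dots> = (\<Sum>u\<in>link_vertices V E \<tau>. (-1) ^ sorted_index u (set \<tau>) * f (simplex (insert u (set \<tau>))))"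
  proof (rule sym, rule sum.reindex_bij_witness[where i = "\<lambda>p. fst p ! snd p"
        and j = "\<lambda>u. (simplex (insert u (set \<tau>)), sorted_index u (set \<tau>))"])
    fix u assume "u \<in> link_vertices V E \<tau>"
    note coface = link_vertex_coface[OF \<tau> this]
    show "(simplex (insert u (set \<tau>)), sorted_index u (set \<tau>)) \<in> ?P"
      using coface(1,2,4) by simp
    show "fst (simplex (insert u (set \<tau>)), sorted_index u (set \<tau>)) !
        snd (simplex (insert u (set \<tau>)), sorted_index u (set \<tau>)) = u"
      using coface(3) by simp
    show "(-1) ^ snd (simplex (insert u (set \<tau>)), sorted_index u (set \<tau>)) *
        f (fst (simplex (insert u (set \<tau>)), sorted_index u (set \<tau>))) =
        (-1) ^ sorted_index u (set \<tau>) * f (simplex (insert u (set \<tau>)))"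
      by simp
  next
    fix p assume "p \<in> ?P"
    then have p: "fst p \<in> ?S" "snd p < length (fst p)" "delete_nth (snd p) (fst p) = \<tau>"
      by auto
    note deleted = deleted_vertex_in_link[OF p]
    show "fst p ! snd p \<in> link_vertices V E \<tau>"
      using deleted(1) .
    show "(simplex (insert (fst p ! snd p) (set \<tau>)), sorted_index (fst p ! snd p) (set \<tau>)) = p"
      using deleted(2,3) by simp
  qed
  finally show ?thesis .
qed

section \<open>Cones\<close>

definition cone :: "nat set \<Rightarrow> (nat \<Rightarrow> nat \<Rightarrow> bool) \<Rightarrow> nat \<Rightarrow> nat \<Rightarrow> (nat list \<Rightarrow> 'k::field) \<Rightarrow> nat list \<Rightarrow> 'k" where
  "cone V E v d f \<sigma> = (if \<sigma> \<in> clique_simplices V E (Suc d) \<and> v \<in> set \<sigma>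
       then (-1) ^ sorted_index v (set \<sigma>) * f (simplex (set \<sigma> - {v})) else 0)"

lemma sorted_index_sign_swap:
  assumes "finite A" "u \<noteq> v" "u \<notin> A" "v \<in> A"
  shows "((-1::'a::comm_ring_1) ^ sorted_index u A) * (-1) ^ sorted_index v (insert u A) =
    - ((-1) ^ sorted_index v A * (-1) ^ sorted_index u (A - {v}))"
proof -
  have "sorted_index u (insert v (A - {v})) =
      (if v < u then Suc (sorted_index u (A - {v})) else sorted_index u (A - {v}))"
    using assms by (intro sorted_index_insert) auto
  moreover have "insert v (A - {v}) = A"
    using assms(4) by blast
  moreover have "sorted_index v (insert u A) = (if u < v then Suc (sorted_index v A) else sorted_index v A)"
    using assms by (intro sorted_index_insert)
  ultimately show ?thesis
    using assms(2) by (cases "u < v") (auto simp: ac_simps)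
qed

lemma finite_link_vertices: "finite V \<Longrightarrow> finite (link_vertices V E \<tau>)"
  by (simp add: link_vertices_def)

lemma boundary_cone_eq_sum:
  fixes f :: "nat list \<Rightarrow> 'k::field"
  assumes "finite V" and \<tau>: "\<tau> \<in> clique_simplices V E (Suc e)"
  shows "boundary V E (Suc e) (cone V E v (Suc e) f) \<tau> =
    (\<Sum>u\<in>link_vertices V E \<tau>. if v \<in> insert u (set \<tau>)
       then (-1) ^ sorted_index u (set \<tau>) * (-1) ^ sorted_index v (insert u (set \<tau>)) *
         f (simplex (insert u (set \<tau>) - {v}))
       else 0)"
  unfolding boundary_eq_sum_link_vertices[OF assms]
proof (rule sum.cong[OF refl])
  fix u assume "u \<in> link_vertices V E \<tau>"
  note coface = link_vertex_coface[OF \<tau> this]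
  have "set (simplex (insert u (set \<tau>))) = insert u (set \<tau>)"
    by simp
  then show "(-1) ^ sorted_index u (set \<tau>) * cone V E v (Suc e) f (simplex (insert u (set \<tau>))) =
     (if v \<in> insert u (set \<tau>)
       then (-1) ^ sorted_index u (set \<tau>) * (-1) ^ sorted_index v (insert u (set \<tau>)) *
         f (simplex (insert u (set \<tau>) - {v}))
       else 0)"
    using coface(1) by (simp add: cone_def mult.assoc)
qed

lemma boundary_cone_off_apex:
  fixes f :: "nat list \<Rightarrow> 'k::field"
  assumes "finite V" and \<tau>: "\<tau> \<in> clique_simplices V E (Suc e)" and v: "v \<in> V" "v \<notin> set \<tau>"
    and star: "f \<tau> \<noteq> 0 \<Longrightarrow> clique V E (insert v (set \<tau>))"
  shows "boundary V E (Suc e) (cone V E v (Suc e) f) \<tau> = f \<tau>"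
proof -
  have sorted: "sorted_wrt (<) \<tau>"
    using \<tau> by (simp add: clique_simplices_iff)
  have "boundary V E (Suc e) (cone V E v (Suc e) f) \<tau> =
      (\<Sum>u\<in>link_vertices V E \<tau>. if u = v then f \<tau> else 0)"
    unfolding boundary_cone_eq_sum[OF assms(1,2)]
    using v(2) sorted by (intro sum.cong) (auto simp: sorted_index_insert_self simplex_set)
  also have "\<dots> = (if v \<in> link_vertices V E \<tau> then f \<tau> else 0)"
    using assms(1) by (simp add: sum.delta link_vertices_def)
  also have "\<dots> = f \<tau>"
    using star v by (auto simp: link_vertices_def)
  finally show ?thesis .
qed

lemma cone_boundary_at_apex:
  fixes f :: "nat list \<Rightarrow> 'k::field"
  assumes fin: "finite V" and \<tau>: "\<tau> \<in> clique_simplices V E (Suc e)" and v: "v \<in> V" "v \<in> set \<tau>"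
    and star: "\<And>\<sigma>. f \<sigma> \<noteq> 0 \<Longrightarrow> clique V E (insert v (set \<sigma>))"
  shows "cone V E v e (boundary V E e f) \<tau> = f \<tau> + (-1) ^ sorted_index v (set \<tau>) *
    (\<Sum>u\<in>link_vertices V E \<tau>. (-1) ^ sorted_index u (set \<tau> - {v}) * f (simplex (insert u (set \<tau> - {v}))))"
proof -
  define A where "A = set \<tau> - {v}"
  define s where "s u = (-1) ^ sorted_index u A * f (simplex (insert u A))" for u
  have sorted: "sorted_wrt (<) \<tau>" and clique: "clique V E (set \<tau>)"
    using \<tau> by (auto simp: clique_simplices_iff)
  have \<tau>A: "set \<tau> = insert v A" "v \<notin> A" "finite A"
    using v(2) by (auto simp: A_def)
  have "card A = Suc e"
    using card_set_clique_simplex[OF \<tau>] \<tau>A by simp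
  moreover have "clique V E A"
    using clique_subset[OF clique] \<tau>A(1) by blast
  ultimately have face: "simplex A \<in> clique_simplices V E e"
    using \<tau>A(3) by (simp add: simplex_in_clique_simplices)
  have v_link: "v \<in> link_vertices V E (simplex A)"
    using v(1) clique \<tau>A by (simp add: link_vertices_def)
  have s_v: "s v = (-1) ^ sorted_index v (set \<tau>) * f \<tau>"
    using sorted v(2)
    by (simp add: s_def \<tau>A(1)[symmetric] A_def sorted_index_remove_self simplex_set insert_absorb)
  have "cone V E v e (boundary V E e f) \<tau> =
      (-1) ^ sorted_index v (set \<tau>) * (\<Sum>u\<in>link_vertices V E (simplex A). s u)"
    using \<tau> v(2) \<tau>A(3)
    by (simp add: cone_def boundary_eq_sum_link_vertices[OF fin face] s_def flip: A_def)
  also have "(\<Sum>u\<in>link_vertices V E (simplex A). s u) =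
      s v + (\<Sum>u\<in>link_vertices V E (simplex A) - {v}. s u)"
    using v_link fin by (simp add: sum.remove finite_link_vertices)
  also have "(\<Sum>u\<in>link_vertices V E (simplex A) - {v}. s u) = (\<Sum>u\<in>link_vertices V E \<tau>. s u)"
  proof (rule sum.mono_neutral_right)
    show "finite (link_vertices V E (simplex A) - {v})"
      using fin by (simp add: finite_link_vertices)
    show "link_vertices V E \<tau> \<subseteq> link_vertices V E (simplex A) - {v}"
      using \<tau>A by (auto simp: link_vertices_def intro: clique_subset)
    show "\<forall>u\<in>link_vertices V E (simplex A) - {v} - link_vertices V E \<tau>. s u = 0"
    proof
      fix u assume u: "u \<in> link_vertices V E (simplex A) - {v} - link_vertices V E \<tau>"
      then have "\<not> clique V E (insert u (insert v A))"
        by (auto simp: link_vertices_def \<tau>A(1,3))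
      then have "\<not> clique V E (insert v (set (simplex (insert u A))))"
        using \<tau>A(3) by (simp add: insert_commute)
      then show "s u = 0"
        using star by (auto simp: s_def)
    qed
  qed
  finally have "cone V E v e (boundary V E e f) \<tau> =
      (-1) ^ sorted_index v (set \<tau>) * (s v + (\<Sum>u\<in>link_vertices V E \<tau>. s u))" .
  then show ?thesis
    unfolding s_v by (simp add: ring_distribs s_def A_def)
qed

lemma boundary_cone_at_apex:
  fixes f :: "nat list \<Rightarrow> 'k::field"
  assumes "finite V" and \<tau>: "\<tau> \<in> clique_simplices V E (Suc e)" and v: "v \<in> set \<tau>"
  shows "boundary V E (Suc e) (cone V E v (Suc e) f) \<tau> = - ((-1) ^ sorted_index v (set \<tau>) *
    (\<Sum>u\<in>link_vertices V E \<tau>. (-1) ^ sorted_index u (set \<tau> - {v}) * f (simplex (insert u (set \<tau> - {v})))))"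
  unfolding boundary_cone_eq_sum[OF assms(1,2)] sum_distrib_left sum_negf[symmetric]
proof (rule sum.cong[OF refl])
  fix u assume "u \<in> link_vertices V E \<tau>"
  then have u: "u \<notin> set \<tau>" "u \<noteq> v"
    using v by (auto simp: link_vertices_def)
  then have "insert u (set \<tau>) - {v} = insert u (set \<tau> - {v})"
    by auto
  then show "(if v \<in> insert u (set \<tau>)
     then (-1) ^ sorted_index u (set \<tau>) * (-1) ^ sorted_index v (insert u (set \<tau>)) *
       f (simplex (insert u (set \<tau>) - {v}))
     else 0) =
    - ((-1) ^ sorted_index v (set \<tau>) *
      ((-1) ^ sorted_index u (set \<tau> - {v}) * f (simplex (insert u (set \<tau> - {v})))))"
    using sorted_index_sign_swap[of "set \<tau>" u v, where 'a = 'k] u v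
    by (simp add: mult.assoc)
qed

lemma boundary_cone_add_cone_boundary:
  fixes f :: "nat list \<Rightarrow> 'k::field"
  assumes "finite V" and "v \<in> V"
    and chain: "\<And>\<sigma>. \<sigma> \<notin> clique_simplices V E (Suc e) \<Longrightarrow> f \<sigma> = 0"
    and star: "\<And>\<sigma>. f \<sigma> \<noteq> 0 \<Longrightarrow> clique V E (insert v (set \<sigma>))"
  shows "boundary V E (Suc e) (cone V E v (Suc e) f) \<tau> + cone V E v e (boundary V E e f) \<tau> = f \<tau>"
proof (cases "\<tau> \<in> clique_simplices V E (Suc e)")
  case False
  then show ?thesis
    using chain[OF False] by (simp add: boundary_def cone_def)
next
  case True
  then show ?thesis
    using assms boundary_cone_off_apex[of V \<tau> E e v f] boundary_cone_at_apex[of V \<tau> E e v f]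
      cone_boundary_at_apex[of V \<tau> E e v f]
    by (cases "v \<in> set \<tau>") (auto simp: cone_def)
qed

section \<open>Cycles in a union of two stars\<close>

lemma boundary_add:
  "boundary V E d (\<lambda>\<sigma>. f \<sigma> + g \<sigma>) \<tau> = boundary V E d f \<tau> + boundary V E d g \<tau>"
  by (auto simp: boundary_def algebra_simps simp flip: sum.distrib intro!: sum.cong)

lemma boundary_diff:
  "boundary V E d (\<lambda>\<sigma>. f \<sigma> - g \<sigma>) \<tau> = boundary V E d f \<tau> - boundary V E d g \<tau>"
  using boundary_add[of V E d "\<lambda>\<sigma>. f \<sigma> - g \<sigma>" g \<tau>] by (simp add: eq_diff_eq)

lemma sum_antisymmetric_eq_0:
  fixes h :: "'a::linorder \<times> 'a \<Rightarrow> 'b::ab_group_add"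
  assumes "finite T" and swap: "\<And>a b. (a, b) \<in> T \<Longrightarrow> (b, a) \<in> T" and irrefl: "\<And>a. (a, a) \<notin> T"
    and antisym: "\<And>a b. (a, b) \<in> T \<Longrightarrow> h (b, a) = - h (a, b)"
  shows "sum h T = 0"
proof -
  define T_lt where "T_lt = {p\<in>T. fst p < snd p}"
  define T_gt where "T_gt = {p\<in>T. snd p < fst p}"
  have "fst p \<noteq> snd p" if "p \<in> T" for p
    using irrefl that by (metis prod.collapse)
  then have split: "T = T_lt \<union> T_gt"
    by (auto simp: T_lt_def T_gt_def neq_iff)
  have "T_lt \<inter> T_gt = {}" "finite T_lt" "finite T_gt"
    using \<open>finite T\<close> by (auto simp: T_lt_def T_gt_def)
  then have "sum h T = sum h T_lt + sum h T_gt"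
    by (subst split) (rule sum.union_disjoint)
  also have "sum h T_gt = (\<Sum>p\<in>T_lt. h (snd p, fst p))"
    by (rule sum.reindex_bij_witness[where i = prod.swap and j = prod.swap])
       (auto simp: T_lt_def T_gt_def intro: swap)
  also have "\<dots> = (\<Sum>p\<in>T_lt. - h p)"
    by (rule sum.cong) (auto simp: T_lt_def antisym)
  finally show ?thesis
    by (simp add: sum_negf)
qed

lemma boundary_boundary:
  fixes g :: "nat list \<Rightarrow> 'k::field"
  assumes fin: "finite V"
  shows "boundary V E d (boundary V E (Suc d) g) \<rho> = 0"
proof (cases "\<rho> \<in> clique_simplices V E d")
  case False
  then show ?thesis
    by (simp add: boundary_def)
next
  case \<rho>: True
  define h where "h = (\<lambda>(u, w). (-1) ^ sorted_index u (set \<rho>) * (-1) ^ sorted_index w (insert u (set \<rho>)) *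
      g (simplex (insert w (insert u (set \<rho>)))) :: 'k)"
  define T where "T = {(u, w). u \<in> V \<and> w \<in> V \<and> u \<notin> set \<rho> \<and> w \<notin> set \<rho> \<and> u \<noteq> w \<and>
      clique V E (insert w (insert u (set \<rho>)))}"
  have "boundary V E d (boundary V E (Suc d) g) \<rho> =
      (\<Sum>u\<in>link_vertices V E \<rho>. \<Sum>w\<in>link_vertices V E (simplex (insert u (set \<rho>))). h (u, w))"
    unfolding boundary_eq_sum_link_vertices[OF fin \<rho>]
  proof (rule sum.cong[OF refl])
    fix u assume "u \<in> link_vertices V E \<rho>"
    then have "simplex (insert u (set \<rho>)) \<in> clique_simplices V E (Suc d)"
      by (rule link_vertex_coface[OF \<rho>])
    then show "(-1) ^ sorted_index u (set \<rho>) * boundary V E (Suc d) g (simplex (insert u (set \<rho>))) =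
        (\<Sum>w\<in>link_vertices V E (simplex (insert u (set \<rho>))). h (u, w))"
      by (simp add: boundary_eq_sum_link_vertices[OF fin] h_def sum_distrib_left mult.assoc)
  qed
  also have "\<dots> = sum h (SIGMA u:link_vertices V E \<rho>. link_vertices V E (simplex (insert u (set \<rho>))))"
    using fin by (simp add: sum.Sigma finite_link_vertices)
  also have "(SIGMA u:link_vertices V E \<rho>. link_vertices V E (simplex (insert u (set \<rho>)))) = T"
    by (auto simp: T_def link_vertices_def intro: clique_subset)
  also have "sum h T = 0"
  proof (rule sum_antisymmetric_eq_0)
    show "finite T"
      using fin by (intro finite_subset[of T "V \<times> V"]) (auto simp: T_def)
    show "(w, u) \<in> T" if "(u, w) \<in> T" for u w
      using that by (auto simp: T_def insert_commute)
    show "(u, u) \<notin> T" for u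
      by (simp add: T_def)
    show "h (w, u) = - h (u, w)" if "(u, w) \<in> T" for u w
    proof -
      have uw: "u \<notin> set \<rho>" "w \<notin> set \<rho>" "u \<noteq> w"
        using that by (auto simp: T_def)
      show ?thesis
        using uw sorted_index_insert[of "set \<rho>" u w] sorted_index_insert[of "set \<rho>" w u]
        by (cases "u < w") (auto simp: h_def insert_commute ac_simps)
    qed
  qed
  finally show ?thesis .
qed

lemma boundary_cone_of_cycle:
  fixes f :: "nat list \<Rightarrow> 'k::field"
  assumes "finite V" and "v \<in> V"
    and "\<And>\<sigma>. \<sigma> \<notin> clique_simplices V E (Suc e) \<Longrightarrow> f \<sigma> = 0"
    and "\<And>\<sigma>. f \<sigma> \<noteq> 0 \<Longrightarrow> clique V E (insert v (set \<sigma>))"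
    and cycle: "\<And>\<rho>. boundary V E e f \<rho> = 0"
  shows "boundary V E (Suc e) (cone V E v (Suc e) f) \<tau> = f \<tau>"
proof -
  have "boundary V E (Suc e) (cone V E v (Suc e) f) \<tau> + cone V E v e (boundary V E e f) \<tau> = f \<tau>"
    using assms(1-4) by (rule boundary_cone_add_cone_boundary)
  moreover have "cone V E v e (boundary V E e f) \<tau> = 0"
    by (simp add: cone_def cycle)
  ultimately show ?thesis
    by simp
qed

lemma cone_boundary_nonzero:
  fixes g :: "nat list \<Rightarrow> 'k::field"
  assumes fin: "finite V" and nz: "cone V E v e (boundary V E e g) \<tau> \<noteq> 0"
  obtains \<sigma> u where "g \<sigma> \<noteq> 0" "\<sigma> \<in> clique_simplices V E (Suc e)" "u \<in> set \<sigma>"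
    "set \<tau> = insert v (set \<sigma> - {u})"
proof -
  define A where "A = set \<tau> - {v}"
  have \<tau>: "\<tau> \<in> clique_simplices V E (Suc e)" and v: "v \<in> set \<tau>"
    and bd: "boundary V E e g (simplex A) \<noteq> 0"
    using nz by (auto simp: cone_def A_def split: if_splits)
  have "card A = Suc e" "clique V E A" "finite A"
    using card_set_clique_simplex[OF \<tau>] \<tau> v clique_subset[of V E "set \<tau>" A]
    by (auto simp: A_def clique_simplices_iff)
  then have face: "simplex A \<in> clique_simplices V E e"
    by (simp add: simplex_in_clique_simplices)
  then have "(\<Sum>u\<in>link_vertices V E (simplex A). (-1) ^ sorted_index u A * g (simplex (insert u A))) \<noteq> 0"
    using bd \<open>finite A\<close> by (simp add: boundary_eq_sum_link_vertices[OF fin])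
  then obtain u where u: "u \<in> link_vertices V E (simplex A)" and g: "g (simplex (insert u A)) \<noteq> 0"
    by (metis (no_types, lifting) mult_zero_right sum.neutral)
  have \<sigma>: "simplex (insert u A) \<in> clique_simplices V E (Suc e)"
    using link_vertex_coface(1)[OF face u] \<open>finite A\<close> by simp
  have "u \<notin> A"
    using u set_sorted_list_of_set[OF \<open>finite A\<close>] unfolding link_vertices_def by blast
  then have set\<sigma>: "set (simplex (insert u A)) = insert u A" "insert u A - {u} = A"
    using \<open>finite A\<close> by auto
  have "set \<tau> = insert v A"
    using v by (auto simp: A_def)
  then show ?thesis
    using that[OF g \<sigma>, of u] set\<sigma> by simp
qed

lemma clique_insert_insert:
  assumes v: "clique V E (insert v B)" and w: "clique V E (insert w B)" and "b \<in> B"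
    and common_neighbour: "\<And>a. clique V E {v, a} \<Longrightarrow> clique V E {w, a} \<Longrightarrow> clique V E {v, w}"
  shows "clique V E (insert w (insert v B))"
proof -
  have "clique V E {v, w}"
    using common_neighbour clique_subset[OF v, of "{v, b}"] clique_subset[OF w, of "{w, b}"] \<open>b \<in> B\<close>
    by blast
  then show ?thesis
    using v w by (auto simp: clique_def)
qed

lemma cone_boundary_in_star:
  fixes g :: "nat list \<Rightarrow> 'k::field"
  assumes fin: "finite V"
    and cover: "\<And>\<sigma>. \<sigma> \<in> clique_simplices V E (Suc e) \<Longrightarrow>
      clique V E (insert v (set \<sigma>)) \<or> clique V E (insert w (set \<sigma>))"
    and common_neighbour: "\<And>a. clique V E {v, a} \<Longrightarrow> clique V E {w, a} \<Longrightarrow> clique V E {v, w}"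
    and outside: "\<And>\<sigma>. g \<sigma> \<noteq> 0 \<Longrightarrow> \<sigma> \<in> clique_simplices V E (Suc e) \<and> \<not> clique V E (insert v (set \<sigma>))"
    and nz: "cone V E v e (boundary V E e g) \<tau> \<noteq> 0"
  shows "clique V E (insert w (set \<tau>))"
proof -
  obtain \<sigma> u where "g \<sigma> \<noteq> 0" and u: "u \<in> set \<sigma>" and \<tau>: "set \<tau> = insert v (set \<sigma> - {u})"
    using cone_boundary_nonzero[OF fin nz] by blast
  then have \<sigma>: "\<sigma> \<in> clique_simplices V E (Suc e)" "\<not> clique V E (insert v (set \<sigma>))"
    using outside by blast+
  have "clique V E (insert v (set \<sigma> - {u}))"
    using nz \<tau> by (auto simp: cone_def clique_simplices_iff split: if_splits)
  moreover have "clique V E (insert w (set \<sigma> - {u}))"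
    using cover[OF \<sigma>(1)] \<sigma>(2) by (auto intro: clique_subset)
  moreover obtain b where "b \<in> set \<sigma> - {u}"
    using clique_simplex_other_vertex[OF \<sigma>(1)] by blast
  ultimately show ?thesis
    using clique_insert_insert common_neighbour \<tau> by metis
qed

lemma cycle_is_boundary_if_star_cover:
  fixes z :: "nat list \<Rightarrow> 'k::field"
  assumes fin: "finite V" and "v \<in> V" and "w \<in> V"
    and cover: "\<And>\<sigma>. \<sigma> \<in> clique_simplices V E (Suc e) \<Longrightarrow>
      clique V E (insert v (set \<sigma>)) \<or> clique V E (insert w (set \<sigma>))"
    and common_neighbour: "\<And>a. clique V E {v, a} \<Longrightarrow> clique V E {w, a} \<Longrightarrow> clique V E {v, w}"
    and z: "z \<in> cycles TYPE('k) V E (Suc e)"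
  shows "z \<in> bdries TYPE('k) V E (Suc e)"
proof -
  (* With z_v the part of z in the star of v, z' = z - \<partial> (cone_v z_v) is a cycle in the star of w,
     hence the boundary of its cone from w. *)
  have chain: "\<And>\<sigma>. \<sigma> \<notin> clique_simplices V E (Suc e) \<Longrightarrow> z \<sigma> = 0"
    and cycle: "\<And>\<rho>. boundary V E e z \<rho> = 0"
    using z by (auto simp: cycles_def chains_def fun_eq_iff)
  define z_v where "z_v \<sigma> = (if clique V E (insert v (set \<sigma>)) then z \<sigma> else 0)" for \<sigma>
  define z_out where "z_out = (\<lambda>\<sigma>. z \<sigma> - z_v \<sigma>)"
  define g_v where "g_v = cone V E v (Suc e) z_v"
  define z' where "z' = (\<lambda>\<tau>. z \<tau> - boundary V E (Suc e) g_v \<tau>)"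
  have boundary_z_v: "boundary V E e z_v \<rho> = - boundary V E e z_out \<rho>" for \<rho>
    using boundary_diff[of V E e z z_v \<rho>] cycle by (simp add: z_out_def)
  have z'_eq: "z' \<tau> = z_out \<tau> - cone V E v e (boundary V E e z_out) \<tau>" for \<tau>
  proof -
    have "boundary V E (Suc e) g_v \<tau> + cone V E v e (boundary V E e z_v) \<tau> = z_v \<tau>"
      unfolding g_v_def using assms(2) chain
      by (intro boundary_cone_add_cone_boundary[OF fin]) (auto simp: z_v_def split: if_splits)
    moreover have "cone V E v e (boundary V E e z_v) \<tau> = - cone V E v e (boundary V E e z_out) \<tau>"
      by (simp add: cone_def boundary_z_v)
    ultimately show ?thesis
      by (simp add: z'_def z_out_def algebra_simps)
  qed
  have z'_chain: "z' \<sigma> = 0" if "\<sigma> \<notin> clique_simplices V E (Suc e)" for \<sigma>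
    using that chain by (simp add: z'_def boundary_def)
  have z'_cycle: "boundary V E e z' \<rho> = 0" for \<rho>
    using boundary_diff[of V E e z "boundary V E (Suc e) g_v" \<rho>]
    by (simp add: z'_def cycle boundary_boundary[OF fin])
  have z'_star: "clique V E (insert w (set \<tau>))" if "z' \<tau> \<noteq> 0" for \<tau>
  proof (cases "z_out \<tau> = 0")
    case True
    then have "cone V E v e (boundary V E e z_out) \<tau> \<noteq> 0"
      using that by (simp add: z'_eq)
    then show ?thesis
      using chain by (intro cone_boundary_in_star[OF fin cover common_neighbour])
        (auto simp: z_out_def z_v_def split: if_splits)
  next
    case False
    then show ?thesis
      using cover chain by (auto simp: z_out_def z_v_def split: if_splits)
  qed
  define g_w where "g_w = cone V E w (Suc e) z'"
  have "boundary V E (Suc e) g_w = z'"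
    unfolding g_w_def using assms(3) z'_chain z'_star z'_cycle
    by (intro ext boundary_cone_of_cycle[OF fin]) auto
  then have "z = boundary V E (Suc e) (\<lambda>\<sigma>. g_v \<sigma> + g_w \<sigma>)"
    by (simp add: fun_eq_iff boundary_add z'_def)
  moreover have "(\<lambda>\<sigma>. g_v \<sigma> + g_w \<sigma>) \<in> chains TYPE('k) V E (Suc (Suc e))"
    by (simp add: chains_def g_v_def g_w_def cone_def)
  ultimately show ?thesis
    unfolding bdries_def by blast
qed

section \<open>Betti numbers\<close>

lemma vector_space_chain_scale: "vector_space (chain_scale :: 'k::field \<Rightarrow> (nat list \<Rightarrow> 'k) \<Rightarrow> _)"
  by unfold_locales (simp_all add: chain_scale_def fun_eq_iff algebra_simps)

lemma sum_fun_apply: "(\<Sum>a\<in>A. f a) x = (\<Sum>a\<in>A. f a x)"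
  by (induction A rule: infinite_finite_induct) auto

lemma chains_subset_span_indicators:
  assumes "finite V"
  shows "chains TYPE('k::field) V E d \<subseteq>
    module.span (chain_scale :: 'k \<Rightarrow> _) ((\<lambda>\<sigma> \<tau>. if \<tau> = \<sigma> then 1 else 0) ` clique_simplices V E d)"
    (is "_ \<subseteq> module.span _ (?\<delta> ` ?S)")
proof
  interpret vs: vector_space "chain_scale :: 'k \<Rightarrow> (nat list \<Rightarrow> 'k) \<Rightarrow> _"
    by (rule vector_space_chain_scale)
  fix f :: "nat list \<Rightarrow> 'k" assume f: "f \<in> chains TYPE('k) V E d"
  have "finite ?S"
    using assms by (rule finite_clique_simplices)
  have "f = (\<Sum>\<sigma>\<in>?S. chain_scale (f \<sigma>) (?\<delta> \<sigma>))"
  proof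
    fix \<tau>
    have "(\<Sum>\<sigma>\<in>?S. chain_scale (f \<sigma>) (?\<delta> \<sigma>)) \<tau> = (\<Sum>\<sigma>\<in>?S. if \<tau> = \<sigma> then f \<sigma> else 0)"
      by (auto simp: sum_fun_apply chain_scale_def intro!: sum.cong)
    then show "f \<tau> = (\<Sum>\<sigma>\<in>?S. chain_scale (f \<sigma>) (?\<delta> \<sigma>)) \<tau>"
      using f \<open>finite ?S\<close> by (auto simp: chains_def)
  qed
  also have "\<dots> \<in> vs.span (?\<delta> ` ?S)"
    by (intro vs.span_sum vs.span_scale vs.span_base) simp
  finally show "f \<in> vs.span (?\<delta> ` ?S)" .
qed

lemma dim_le_dim_if_subset_chains:
  assumes fin: "finite V" and "S \<subseteq> T" and T: "T \<subseteq> chains TYPE('k::field) V E d"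
  shows "vector_space.dim (chain_scale :: 'k \<Rightarrow> _) S \<le> vector_space.dim (chain_scale :: 'k \<Rightarrow> _) T"
proof -
  interpret vs: vector_space "chain_scale :: 'k \<Rightarrow> (nat list \<Rightarrow> 'k) \<Rightarrow> _"
    by (rule vector_space_chain_scale)
  obtain B where B: "B \<subseteq> T" "vs.independent B" "T \<subseteq> vs.span B" "card B = vs.dim T"
    by (rule vs.basis_exists)
  have "finite B"
    using vs.independent_span_bound[OF _ B(2)] B(1) T chains_subset_span_indicators[OF fin]
      finite_clique_simplices[OF fin]
    by (meson finite_imageI order_trans)
  then have "vs.dim S \<le> card B"
    using vs.dim_le_card[of S B] \<open>S \<subseteq> T\<close> B(3) by blast
  then show ?thesis
    using B(4) by simp
qed

lemma simplicial_betti_eq_0_if_cycles_subset_bdries: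
  assumes "finite V" and "cycles TYPE('k::field) V E d \<subseteq> bdries TYPE('k) V E d"
  shows "simplicial_betti TYPE('k) V E d = 0"
proof -
  have "bdries TYPE('k) V E d \<subseteq> chains TYPE('k) V E d"
    by (auto simp: bdries_def chains_def boundary_def)
  then show ?thesis
    unfolding simplicial_betti_def using dim_le_dim_if_subset_chains[OF assms] by simp
qed

section \<open>Threshold graphs of rank-one matrices\<close>

lemma graph_edge_sym: "graph_edge M n t i j = graph_edge M n t j i"
  by (auto simp: graph_edge_def min.commute max.commute)

lemma graph_edge_mono:
  assumes sym: "\<And>i j. M i j = M j i" and "graph_edge M n t i j"
    and "a \<in> {1..n}" "b \<in> {1..n}" "a \<noteq> b" and le: "M a b \<le> M i j"
  shows "graph_edge M n t a b"
proof -
  have M_min_max: "M (min p q) (max p q) = M p q" for p q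
    using sym by (cases "p \<le> q") (auto simp: min_def max_def)
  have "{(p, q). 1 \<le> p \<and> p < q \<and> q \<le> n \<and> M p q \<le> M (min a b) (max a b)} \<subseteq>
      {(p, q). 1 \<le> p \<and> p < q \<and> q \<le> n \<and> M p q \<le> M (min i j) (max i j)}"
    using le by (auto simp: M_min_max)
  moreover have "finite {(p, q). 1 \<le> p \<and> p < q \<and> q \<le> n \<and> M p q \<le> M (min i j) (max i j)}"
    by (rule finite_subset[of _ "{1..n} \<times> {1..n}"]) auto
  ultimately have "ordering_rank M n (min a b) (max a b) \<le> ordering_rank M n (min i j) (max i j)"
    unfolding ordering_rank_def by (rule card_mono[rotated])
  then show ?thesis
    using assms(2-5) unfolding graph_edge_def by (meson of_nat_le_iff order_trans)
qed

lemma clique_insertI: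
  assumes "\<And>i j. E i j = E j i" and "v \<in> V" and "clique V E A"
    and "\<And>a. a \<in> A \<Longrightarrow> a \<noteq> v \<Longrightarrow> E v a"
  shows "clique V E (insert v A)"
  using assms by (auto simp: clique_def)

locale rank_one_sign_split =
  fixes x :: "nat \<Rightarrow> real" and n l :: nat and t :: real
  assumes l_bounds: "1 \<le> l" "l < n"
    and mono: "\<And>i j. 1 \<le> i \<Longrightarrow> i \<le> j \<Longrightarrow> j \<le> n \<Longrightarrow> x i \<le> x j"
    and neg: "x l < 0" and nonneg: "0 \<le> x (Suc l)"
begin

abbreviation E :: "nat \<Rightarrow> nat \<Rightarrow> bool" where
  "E \<equiv> graph_edge (\<lambda>i j. - (x i * x j)) n t"

lemma E_sym: "E i j = E j i"
  by (rule graph_edge_sym)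

lemma E_mono: "E i j \<Longrightarrow> a \<in> {1..n} \<Longrightarrow> b \<in> {1..n} \<Longrightarrow> a \<noteq> b \<Longrightarrow> x i * x j \<le> x a * x b \<Longrightarrow> E a b"
  by (rule graph_edge_mono) (auto simp: mult.commute)

lemma E_in_range: "E i j \<Longrightarrow> i \<in> {1..n} \<and> j \<in> {1..n} \<and> i \<noteq> j"
  by (simp add: graph_edge_def)

lemma neg_below: "i \<in> {1..n} \<Longrightarrow> i \<le> l \<Longrightarrow> x i < 0"
  using mono[of i l] l_bounds neg by auto

lemma nonneg_above: "i \<in> {1..n} \<Longrightarrow> l < i \<Longrightarrow> 0 \<le> x i"
  using mono[of "Suc l" i] nonneg by auto

lemma mixed_product_nonpos: "x l * x (Suc l) \<le> 0"
  using neg nonneg by (simp add: mult_nonpos_nonneg)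

lemma same_side_product_nonneg:
  assumes "a \<in> {1..n}" "b \<in> {1..n}" "a \<le> l \<longleftrightarrow> b \<le> l"
  shows "0 \<le> x a * x b"
  using assms neg_below[of a] neg_below[of b] nonneg_above[of a] nonneg_above[of b]
  by (cases "a \<le> l") (auto intro: mult_nonpos_nonpos)

lemma star_cover_at_sign_change:
  assumes E_l: "E l (Suc l)" and A: "clique {1..n} E A"
  shows "clique {1..n} E (insert l A) \<or> clique {1..n} E (insert (Suc l) A)"
proof (cases "\<exists>i\<in>A. i \<le> l")
  case True
  then obtain i where i: "i \<in> A" "i \<le> l"
    by blast
  have "E l a" if a: "a \<in> A" "a \<noteq> l" for a
  proof (cases "a \<le> l")
    case True
    then show ?thesis
      using E_mono[OF E_l, of l a] a A l_bounds mixed_product_nonpos same_side_product_nonneg[of l a]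
      by (auto simp: clique_def)
  next
    case False
    then have "E i a" and "i \<in> {1..n}" "a \<in> {1..n}"
      using A a i by (auto simp: clique_def)
    moreover have "x i * x a \<le> x l * x a"
      using mono[of i l] l_bounds nonneg_above[of a] False \<open>i \<in> {1..n}\<close> \<open>a \<in> {1..n}\<close> i(2)
      by (intro mult_right_mono) auto
    ultimately show ?thesis
      using E_mono[of i a l a] l_bounds that(2) by auto
  qed
  then show ?thesis
    using A l_bounds by (intro disjI1 clique_insertI[OF E_sym]) auto
next
  case False
  have "E (Suc l) a" if a: "a \<in> A" "a \<noteq> Suc l" for a
    using E_mono[OF E_l, of "Suc l" a] a A False l_bounds mixed_product_nonpos
      same_side_product_nonneg[of "Suc l" a]
    by (auto simp: clique_def)
  then show ?thesis
    using A l_bounds by (intro disjI2 clique_insertI[OF E_sym]) auto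
qed

lemma no_mixed_edge:
  assumes "\<not> E l (Suc l)" and "i \<le> l" "l < j"
  shows "\<not> E i j"
proof
  assume E_ij: "E i j"
  then have ij: "i \<in> {1..n}" "j \<in> {1..n}"
    by (auto dest: E_in_range)
  have "x i * x j \<le> x l * x j"
    using mono[of i l] nonneg_above[of j] ij assms(2,3) l_bounds by (intro mult_right_mono) auto
  also have "\<dots> \<le> x l * x (Suc l)"
    using mono[of "Suc l" j] ij assms(3) neg by (intro mult_left_mono_neg) auto
  finally have "E l (Suc l)"
    using E_mono[OF E_ij] l_bounds by auto
  with assms(1) show False ..
qed

lemma star_cover_without_sign_change:
  assumes "\<not> E l (Suc l)" and A: "clique {1..n} E A" and "a \<in> A" "b \<in> A" "a \<noteq> b"
  shows "clique {1..n} E (insert 1 A) \<or> clique {1..n} E (insert n A)"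
proof -
  have edge: "E p q" if "p \<in> A" "q \<in> A" "p \<noteq> q" for p q
    using A that by (auto simp: clique_def)
  have one_side: "p \<le> l \<longleftrightarrow> q \<le> l" if "p \<in> A" "q \<in> A" "p \<noteq> q" for p q
    using no_mixed_edge[OF assms(1)] edge[OF that] edge[OF that(2,1)] that(3) by (metis not_le)
  have in_range: "p \<in> {1..n}" if "p \<in> A" for p
    using A that by (auto simp: clique_def)
  define other where "other p = (if p = a then b else a)" for p
  have other: "other p \<in> A \<and> other p \<noteq> p" if "p \<in> A" for p
    using \<open>a \<in> A\<close> \<open>b \<in> A\<close> \<open>a \<noteq> b\<close> by (simp add: other_def)
  show ?thesis
  proof (cases "a \<le> l")
    case True
    have "E 1 p" if "p \<in> A" "p \<noteq> 1" for p
    proof -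
      have "p \<le> l" "other p \<le> l"
        using one_side other True \<open>a \<in> A\<close> that(1) by metis+
      then have "x p * x (other p) \<le> x p * x 1"
        using mono[of 1 "other p"] neg_below[of p] in_range other that(1) l_bounds
        by (intro mult_left_mono_neg) auto
      then show ?thesis
        using E_mono[OF edge[of p "other p"], of 1 p] in_range other[OF that(1)] that l_bounds
        by (auto simp: mult.commute)
    qed
    then show ?thesis
      using A l_bounds by (intro disjI1 clique_insertI[OF E_sym]) auto
  next
    case False
    have "E n p" if "p \<in> A" "p \<noteq> n" for p
    proof -
      have "\<not> p \<le> l"
        using one_side False \<open>a \<in> A\<close> that(1) by metis
      then have "x p * x (other p) \<le> x p * x n"
        using mono[of "other p" n] nonneg_above[of p] in_range other that(1)
        by (intro mult_left_mono) auto
      then show ?thesis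
        using E_mono[OF edge[of p "other p"], of n p] in_range other[OF that(1)] that l_bounds
        by (auto simp: mult.commute)
    qed
    then show ?thesis
      using A l_bounds by (intro disjI2 clique_insertI[OF E_sym]) auto
  qed
qed

lemma no_common_neighbour_without_sign_change:
  assumes "\<not> E l (Suc l)" and "clique {1..n} E {1, a}" "clique {1..n} E {n, a}"
  shows False
proof (cases "a \<le> l")
  case True
  then have "E a n"
    using assms(3) l_bounds by (auto simp: clique_def)
  then show False
    using no_mixed_edge[OF assms(1) True] l_bounds by simp
next
  case False
  then have "E 1 a"
    using assms(2) l_bounds by (auto simp: clique_def)
  then show False
    using no_mixed_edge[OF assms(1)] False l_bounds by simp
qed

lemma cycles_subset_bdries: "cycles TYPE('k::field) {1..n} E (Suc e) \<subseteq> bdries TYPE('k) {1..n} E (Suc e)"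
proof (cases "E l (Suc l)")
  case True
  have "clique {1..n} E {l, Suc l}"
    using True E_sym l_bounds by (auto simp: clique_def)
  moreover have "clique {1..n} E (insert l (set \<sigma>)) \<or> clique {1..n} E (insert (Suc l) (set \<sigma>))"
    if "\<sigma> \<in> clique_simplices {1..n} E (Suc e)" for \<sigma>
    using that star_cover_at_sign_change[OF True] by (simp add: clique_simplices_iff)
  ultimately show ?thesis
    using l_bounds by (intro subsetI cycle_is_boundary_if_star_cover[where v = l and w = "Suc l"]) auto
next
  case False
  have cover: "clique {1..n} E (insert 1 (set \<sigma>)) \<or> clique {1..n} E (insert n (set \<sigma>))"
    if \<sigma>: "\<sigma> \<in> clique_simplices {1..n} E (Suc e)" for \<sigma>
  proof -
    obtain a where "a \<in> set \<sigma>"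
      using \<sigma> by (cases \<sigma>) (auto simp: clique_simplices_iff)
    moreover obtain b where "b \<in> set \<sigma>" "b \<noteq> a"
      using clique_simplex_other_vertex[OF \<sigma>] by blast
    ultimately show ?thesis
      using \<sigma> star_cover_without_sign_change[OF False] by (auto simp: clique_simplices_iff)
  qed
  show ?thesis
    using False l_bounds no_common_neighbour_without_sign_change
    by (intro subsetI cycle_is_boundary_if_star_cover[where v = 1 and w = n] cover) auto
qed

end

theorem theorem3:
  fixes x :: "nat \<Rightarrow> real" and n l :: nat and M :: "nat \<Rightarrow> nat \<Rightarrow> real"
  assumes "n \<ge> 2" and "1 \<le> l" and "l \<le> n - 1"
    and "\<And>i j. 1 \<le> i \<Longrightarrow> i \<le> j \<Longrightarrow> j \<le> n \<Longrightarrow> x i \<le> x j"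
    and "x l < 0" and "0 \<le> x (Suc l)"
    and "M = (\<lambda>i j. - (x i * x j))"
    and "\<And>a b c d. 1 \<le> a \<Longrightarrow> a < b \<Longrightarrow> b \<le> n \<Longrightarrow> 1 \<le> c \<Longrightarrow> c < d \<Longrightarrow> d \<le> n \<Longrightarrow>
           (a, b) \<noteq> (c, d) \<Longrightarrow> M a b \<noteq> M c d"
  shows "\<forall>k t. k > 0 \<longrightarrow> t \<in> {0..1} \<longrightarrow> betti_curve TYPE('k::field) M n k t = 0"
proof (intro allI impI)
  fix k :: nat and t :: real
  assume "0 < k" and "t \<in> {0..1}"
  then obtain e where k: "k = Suc e"
    using gr0_conv_Suc by blast
  interpret rank_one_sign_split x n l t
    using assms(1-6) by unfold_locales auto
  show "betti_curve TYPE('k) M n k t = 0"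
    unfolding betti_curve_def assms(7) k
    by (intro simplicial_betti_eq_0_if_cycles_subset_bdries cycles_subset_bdries) simp
qed

end
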